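(* Let $\mathcal{A}$ be a finite abelian group with $|\mathcal{A}|\ge 3$. Let $M_2(p_1,p_2,p_3)$ be the graph obtained from the complete graph on $\{v_1,v_2,v_3,v_4\}$ by deleting the edge $v_2v_4$ and attaching $p_i\ge 0$ pendant vertices to $v_i$ for $i=1,2,3$, and assume $M_2(p_1,p_2,p_3)$ has diameter $3$. Then $M_2(p_1,p_2,p_3)$ is $\mathcal{A}$-vertex magic if and only if $p_1=p_3=0$, $p_2\ge 2$, and $\mathcal{A}$ contains a square element.
   Context: An element $g\in\mathcal{A}$ is a square if $g\neq 0$ and $g=2h$ for some $h\in\mathcal{A}$. A map $\ell:V(G)\to\mathcal{A}\setminus\{0\}$ is an $\mathcal{A}$-vertex magic labeling if there is $\mu\in\mathcal{A}$ with $\sum_{u\in N(v)}\ell(u)=\mu$ for every vertex $v$; $G$ is $\mathcal{A}$-vertex magic if such a labeling exists. *)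

theory Defs
  imports Main
begin

definition nbhd :: "'v set \<Rightarrow> ('v \<Rightarrow> 'v \<Rightarrow> bool) \<Rightarrow> 'v \<Rightarrow> 'v set" where
  "nbhd V E v = {u \<in> V. E v u}"

fun within_dist :: "'v set \<Rightarrow> ('v \<Rightarrow> 'v \<Rightarrow> bool) \<Rightarrow> nat \<Rightarrow> 'v \<Rightarrow> 'v \<Rightarrow> bool" where
  "within_dist V E 0 u v = (u = v)"
| "within_dist V E (Suc n) u v =
     (within_dist V E n u v \<or> (\<exists>w\<in>V. E u w \<and> within_dist V E n w v))"

definition has_diameter :: "'v set \<Rightarrow> ('v \<Rightarrow> 'v \<Rightarrow> bool) \<Rightarrow> nat \<Rightarrow> bool" where
  "has_diameter V E d \<longleftrightarrow>
     (\<forall>u\<in>V. \<forall>v\<in>V. within_dist V E d u v) \<and>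
     (\<exists>u\<in>V. \<exists>v\<in>V. \<not> within_dist V E (d - 1) u v)"

definition is_square :: "'a::ab_group_add \<Rightarrow> bool" where
  "is_square g \<longleftrightarrow> g \<noteq> 0 \<and> (\<exists>h. g = h + h)"

definition vertex_magic_labeling ::
  "'v set \<Rightarrow> ('v \<Rightarrow> 'v \<Rightarrow> bool) \<Rightarrow> ('v \<Rightarrow> 'a::ab_group_add) \<Rightarrow> bool" where
  "vertex_magic_labeling V E l \<longleftrightarrow>
     (\<forall>v\<in>V. l v \<noteq> 0) \<and> (\<exists>\<mu>. \<forall>v\<in>V. (\<Sum>u\<in>nbhd V E v. l u) = \<mu>)"

definition vertex_magic :: "'a::ab_group_add itself \<Rightarrow> 'v set \<Rightarrow> ('v \<Rightarrow> 'v \<Rightarrow> bool) \<Rightarrow> bool" where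
  "vertex_magic TYPE('a) V E \<longleftrightarrow> (\<exists>l::'v \<Rightarrow> 'a. vertex_magic_labeling V E l)"

text \<open>Vertices: Core i is v_i (i = 1..4); Pend i j is the j-th pendant (j < p_i) attached to v_i.\<close>
datatype m2vert = Core nat | Pend nat nat

definition pcount :: "nat \<Rightarrow> nat \<Rightarrow> nat \<Rightarrow> nat \<Rightarrow> nat" where
  "pcount p1 p2 p3 i = (if i = 1 then p1 else if i = 2 then p2 else if i = 3 then p3 else 0)"

definition M2_verts :: "nat \<Rightarrow> nat \<Rightarrow> nat \<Rightarrow> m2vert set" where
  "M2_verts p1 p2 p3 = Core ` {1..4} \<union> {Pend i j | i j. i \<in> {1,2,3} \<and> j < pcount p1 p2 p3 i}"

fun M2_adj :: "m2vert \<Rightarrow> m2vert \<Rightarrow> bool" where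
  "M2_adj (Core i) (Core j) = (i \<noteq> j \<and> {i, j} \<noteq> {2, 4})"
| "M2_adj (Core i) (Pend k j) = (i = k)"
| "M2_adj (Pend k j) (Core i) = (i = k)"
| "M2_adj (Pend k j) (Pend k' j') = False"

end

theory Submission
  imports Defs
begin

(* Let mu be the magic constant. The only neighbours of v4 are v1 and v3, so l v1 + l v3 = mu,
   and a pendant at v_i forces l v_i = mu. Hence neither v1 nor v3 carries a pendant (the label
   of the other one would vanish); by the diameter condition v2 then does, so l v2 = mu is nonzero
   and the pendant labels at v2 sum to zero, which needs at least two of them. Comparing the
   sums at v1 and v3 gives l v1 = l v3, so mu = 2 l v1 is a square. Conversely, for mu = 2h
   label v2 by mu, v1 and v3 by h, v4 by -h, and the pendants at v2 by nonzero elements summing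
   to zero, which exist for any number p2 >= 2 of pendants once the group has three elements. *)

lemma within_dist_mono:
  assumes "m \<le> n" "within_dist V E m u v"
  shows "within_dist V E n u v"
  using assms by (induction n) (auto simp: le_Suc_eq)

lemma within_dist_2_if_dominating:
  assumes "c \<in> V" "\<And>x. x \<in> V \<Longrightarrow> x \<noteq> c \<Longrightarrow> E c x \<and> E x c" "u \<in> V" "v \<in> V"
  shows "within_dist V E 2 u v"
proof -
  have "u = v \<or> (u = c \<and> E c v) \<or> (v = c \<and> E u c) \<or> (E u c \<and> E c v)"
    using assms by metis
  then show ?thesis using assms(1,3,4) by (auto simp: numeral_2_eq_2)
qed

lemma not_has_diameter_if_dominating:
  assumes "c \<in> V" "\<And>x. x \<in> V \<Longrightarrow> x \<noteq> c \<Longrightarrow> E c x \<and> E x c" "d \<ge> 3"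
  shows "\<not> has_diameter V E d"
  using within_dist_2_if_dominating[of c V E] within_dist_mono[of 2 "d - 1" V E] assms
  by (fastforce simp: has_diameter_def)

lemma ex_not_in_doubleton:
  fixes a b :: "'a::finite"
  assumes "card (UNIV :: 'a set) \<ge> 3"
  obtains y :: 'a where "y \<noteq> a" "y \<noteq> b"
proof -
  have "\<not> UNIV \<subseteq> {a, b}"
  proof
    assume "UNIV \<subseteq> {a, b}"
    then have "card (UNIV :: 'a set) \<le> card {a, b}" by (simp add: card_mono)
    also have "\<dots> \<le> 2" by (simp add: card_insert_le_m1)
    finally show False using assms by simp
  qed
  then show ?thesis using that by blast
qed

lemma exists_nonzero_zero_sum:
  assumes "card (UNIV :: 'a::{ab_group_add, finite} set) \<ge> 3" "n \<ge> 2"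
  shows "\<exists>f :: nat \<Rightarrow> 'a. (\<forall>j. f j \<noteq> 0) \<and> (\<Sum>j<n. f j) = 0"
proof -
  obtain x :: 'a where x: "x \<noteq> 0" using ex_not_in_doubleton[OF assms(1)] by metis
  obtain y :: 'a where y: "y \<noteq> 0" "y \<noteq> - x" using ex_not_in_doubleton[OF assms(1)] by metis
  have xy: "x + y \<noteq> 0" using y by (metis add.commute add_eq_0_iff)
  show ?thesis
    using assms(2)
  proof (induction n rule: less_induct)
    case (less n)
    consider "n = 2" | "n = 3" | "n \<ge> 4" using less.prems by linarith
    then show ?case
    proof cases
      case 1
      show ?thesis
        by (intro exI[of _ "\<lambda>j. if j = 0 then x else - x"]) (simp add: 1 x numeral_2_eq_2)
    next
      case 2
      show ?thesis
        by (intro exI[of _ "\<lambda>j. if j = 0 then x else if j = 1 then y else - (x + y)"])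
          (use 2 x y xy in \<open>auto simp: numeral_3_eq_3\<close>)
    next
      case 3
      define m where "m = n - 2"
      have n: "n = Suc (Suc m)" using 3 by (simp add: m_def)
      obtain f :: "nat \<Rightarrow> 'a" where f: "\<forall>j. f j \<noteq> 0" "(\<Sum>j<m. f j) = 0"
        using less.IH[of m] 3 unfolding m_def by fastforce
      define g where "g j = (if j < m then f j else if j = m then x else - x)" for j
      have "(\<Sum>j<n. g j) = (\<Sum>j<m. g j) + x - x" by (simp add: n g_def)
      also have "(\<Sum>j<m. g j) = (\<Sum>j<m. f j)" by (simp add: g_def)
      finally have "(\<Sum>j<n. g j) = 0" using f by simp
      moreover have "\<forall>j. g j \<noteq> 0" using f x by (simp add: g_def)
      ultimately show ?thesis by blast
    qed
  qed
qed

lemma M2_adj_Core_Core [simp]: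
  "M2_adj (Core i) (Core j) \<longleftrightarrow> i \<noteq> j \<and> \<not> (i = 2 \<and> j = 4 \<or> i = 4 \<and> j = 2)"
  by (auto simp: doubleton_eq_iff)

declare M2_adj.simps(1) [simp del]

lemma Core_in_M2_verts [simp]: "Core i \<in> M2_verts p1 p2 p3 \<longleftrightarrow> i \<in> {1..4}"
  by (auto simp: M2_verts_def)

lemma Pend_in_M2_verts [simp]:
  "Pend i j \<in> M2_verts p1 p2 p3 \<longleftrightarrow> i \<in> {1,2,3} \<and> j < pcount p1 p2 p3 i"
  by (auto simp: M2_verts_def)

lemma nbhd_M2_Pend: "i \<in> {1,2,3} \<Longrightarrow> nbhd (M2_verts p1 p2 p3) M2_adj (Pend i j) = {Core i}"
  by (auto simp: nbhd_def elim!: M2_adj.elims)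

lemma nbhd_M2_Core1:
  "nbhd (M2_verts p1 p2 p3) M2_adj (Core 1) = {Core 2, Core 3, Core 4} \<union> Pend 1 ` {..<p1}"
  by (auto simp: nbhd_def pcount_def elim: M2_adj.elims)

lemma nbhd_M2_Core2:
  "nbhd (M2_verts p1 p2 p3) M2_adj (Core 2) = {Core 1, Core 3} \<union> Pend 2 ` {..<p2}"
  by (auto simp: nbhd_def pcount_def elim: M2_adj.elims)

lemma nbhd_M2_Core3:
  "nbhd (M2_verts p1 p2 p3) M2_adj (Core 3) = {Core 1, Core 2, Core 4} \<union> Pend 3 ` {..<p3}"
  by (auto simp: nbhd_def pcount_def elim: M2_adj.elims)

lemma nbhd_M2_Core4: "nbhd (M2_verts p1 p2 p3) M2_adj (Core 4) = {Core 1, Core 3}"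
  by (auto simp: nbhd_def pcount_def elim: M2_adj.elims)

lemma sum_union_Pend:
  assumes "finite S" "S \<subseteq> range Core"
  shows "(\<Sum>u\<in>S \<union> Pend i ` {..<p}. l u) = (\<Sum>u\<in>S. l u) + (\<Sum>j<p. l (Pend i j))"
  using assms by (subst sum.union_disjoint) (auto simp: sum.reindex inj_on_def)

lemma M2_neighbour_sums_eq_iff:
  fixes l :: "m2vert \<Rightarrow> 'a::cancel_comm_monoid_add"
  shows "(\<forall>v\<in>M2_verts p1 p2 p3. (\<Sum>u\<in>nbhd (M2_verts p1 p2 p3) M2_adj v. l u) = \<mu>) \<longleftrightarrow>
     l (Core 1) + l (Core 3) = \<mu> \<and>
     (\<Sum>j<p2. l (Pend 2 j)) = 0 \<and>
     l (Core 2) + l (Core 3) + l (Core 4) + (\<Sum>j<p1. l (Pend 1 j)) = \<mu> \<and>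
     l (Core 1) + l (Core 2) + l (Core 4) + (\<Sum>j<p3. l (Pend 3 j)) = \<mu> \<and>
     (\<forall>i\<in>{1,2,3}. 0 < pcount p1 p2 p3 i \<longrightarrow> l (Core i) = \<mu>)"
    (is "?magic \<longleftrightarrow> ?equations")
proof -
  have sums: "(\<Sum>u\<in>nbhd (M2_verts p1 p2 p3) M2_adj (Core 1). l u) =
      l (Core 2) + l (Core 3) + l (Core 4) + (\<Sum>j<p1. l (Pend 1 j))"
    "(\<Sum>u\<in>nbhd (M2_verts p1 p2 p3) M2_adj (Core 2). l u) =
      l (Core 1) + l (Core 3) + (\<Sum>j<p2. l (Pend 2 j))"
    "(\<Sum>u\<in>nbhd (M2_verts p1 p2 p3) M2_adj (Core 3). l u) =
      l (Core 1) + l (Core 2) + l (Core 4) + (\<Sum>j<p3. l (Pend 3 j))"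
    "(\<Sum>u\<in>nbhd (M2_verts p1 p2 p3) M2_adj (Core 4). l u) = l (Core 1) + l (Core 3)"
    unfolding nbhd_M2_Core1 nbhd_M2_Core2 nbhd_M2_Core3 nbhd_M2_Core4
    by ((subst sum_union_Pend)?; simp add: add.assoc)+
  show ?thesis
  proof
    assume magic: ?magic
    have at_Core: "(\<Sum>u\<in>nbhd (M2_verts p1 p2 p3) M2_adj (Core i). l u) = \<mu>" if "i \<in> {1..4}" for i
      using magic that by simp
    have at_Pend: "l (Core i) = \<mu>" if "i \<in> {1,2,3}" "0 < pcount p1 p2 p3 i" for i
      using magic[rule_format, of "Pend i 0"] that by (simp add: nbhd_M2_Pend)
    have "l (Core 1) + l (Core 3) = \<mu>"
      using at_Core[of 4] unfolding sums(4) by simp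
    moreover have "l (Core 1) + l (Core 3) + (\<Sum>j<p2. l (Pend 2 j)) = \<mu>"
      using at_Core[of 2] unfolding sums(2) by simp
    ultimately show ?equations
      using at_Core[of 1, unfolded sums(1)] at_Core[of 3, unfolded sums(3)] at_Pend by simp
  next
    assume equations: ?equations
    show ?magic
    proof
      fix v assume "v \<in> M2_verts p1 p2 p3"
      moreover have "{1..4} = {1, 2, 3, 4 :: nat}" by auto
      ultimately consider "v = Core 1" | "v = Core 2" | "v = Core 3" | "v = Core 4"
        | i j where "v = Pend i j" "i \<in> {1,2,3}" "j < pcount p1 p2 p3 i"
        by (auto simp: M2_verts_def)
      then show "(\<Sum>u\<in>nbhd (M2_verts p1 p2 p3) M2_adj v. l u) = \<mu>"
      proof cases
        case 5
        then show ?thesis using equations by (auto simp: nbhd_M2_Pend)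
      qed (use equations sums in simp_all)
    qed
  qed
qed

lemma M2_pendants_if_diameter_3:
  assumes "has_diameter (M2_verts p1 p2 p3) M2_adj 3"
  shows "0 < p2 \<or> 0 < p1 \<and> 0 < p3"
proof (rule ccontr)
  assume "\<not> ?thesis"
  then consider "p2 = 0" "p3 = 0" | "p2 = 0" "p1 = 0" by auto
  then obtain c where "c \<in> M2_verts p1 p2 p3"
    "\<And>x. x \<in> M2_verts p1 p2 p3 \<Longrightarrow> x \<noteq> c \<Longrightarrow> M2_adj c x \<and> M2_adj x c"
  proof cases
    case 1
    then have "M2_adj (Core 1) x \<and> M2_adj x (Core 1)"
      if "x \<in> M2_verts p1 p2 p3" "x \<noteq> Core 1" for x
      using that by (cases x) (auto simp: pcount_def)
    then show ?thesis by (intro that[of "Core 1"]) auto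
  next
    case 2
    then have "M2_adj (Core 3) x \<and> M2_adj x (Core 3)"
      if "x \<in> M2_verts p1 p2 p3" "x \<noteq> Core 3" for x
      using that by (cases x) (auto simp: pcount_def)
    then show ?thesis by (intro that[of "Core 3"]) auto
  qed
  then show False
    using not_has_diameter_if_dominating[of c "M2_verts p1 p2 p3" M2_adj 3] assms by simp
qed

lemma M2_vertex_magic_labelingD:
  fixes l :: "m2vert \<Rightarrow> 'a::ab_group_add"
  assumes "vertex_magic_labeling (M2_verts p1 p2 p3) M2_adj l"
    and "0 < p2 \<or> 0 < p1 \<and> 0 < p3"
  shows "p1 = 0 \<and> p3 = 0 \<and> 2 \<le> p2 \<and> is_square (l (Core 2))"
proof -
  obtain \<mu> where nonzero: "\<And>v. v \<in> M2_verts p1 p2 p3 \<Longrightarrow> l v \<noteq> 0"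
    and "\<forall>v\<in>M2_verts p1 p2 p3. (\<Sum>u\<in>nbhd (M2_verts p1 p2 p3) M2_adj v. l u) = \<mu>"
    using assms(1) unfolding vertex_magic_labeling_def by blast
  then have v4: "l (Core 1) + l (Core 3) = \<mu>"
    and pendants_v2: "(\<Sum>j<p2. l (Pend 2 j)) = 0"
    and v1: "l (Core 2) + l (Core 3) + l (Core 4) + (\<Sum>j<p1. l (Pend 1 j)) = \<mu>"
    and v3: "l (Core 1) + l (Core 2) + l (Core 4) + (\<Sum>j<p3. l (Pend 3 j)) = \<mu>"
    and pendant: "\<And>i. i \<in> {1,2,3} \<Longrightarrow> 0 < pcount p1 p2 p3 i \<Longrightarrow> l (Core i) = \<mu>"
    unfolding M2_neighbour_sums_eq_iff by blast+
  have p1: "p1 = 0"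
  proof (rule ccontr)
    assume "p1 \<noteq> 0"
    then have "l (Core 1) = \<mu>" using pendant[of 1] by (simp add: pcount_def)
    with v4 nonzero[of "Core 3"] show False by simp
  qed
  have p3: "p3 = 0"
  proof (rule ccontr)
    assume "p3 \<noteq> 0"
    then have "l (Core 3) = \<mu>" using pendant[of 3] by (simp add: pcount_def)
    with v4 nonzero[of "Core 1"] show False by simp
  qed
  from assms(2) p1 have "0 < p2" by simp
  then have v2: "l (Core 2) = \<mu>" using pendant[of 2] by (simp add: pcount_def)
  have "p2 \<noteq> 1"
  proof
    assume "p2 = 1"
    with pendants_v2 nonzero[of "Pend 2 0"] show False by (simp add: pcount_def)
  qed
  have "l (Core 2) + l (Core 3) + l (Core 4) = l (Core 1) + l (Core 2) + l (Core 4)"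
    using v1 v3 p1 p3 by simp
  then have "l (Core 3) = l (Core 1)" by (simp add: algebra_simps)
  with v4 v2 have "l (Core 2) = l (Core 1) + l (Core 1)" by simp
  moreover have "l (Core 2) \<noteq> 0" using nonzero[of "Core 2"] by simp
  ultimately have "is_square (l (Core 2))" unfolding is_square_def by blast
  moreover have "2 \<le> p2" using \<open>0 < p2\<close> \<open>p2 \<noteq> 1\<close> by simp
  ultimately show ?thesis using p1 p3 by blast
qed

lemma M2_vertex_magic_if_zero_sum_pendants:
  fixes f :: "nat \<Rightarrow> 'a::ab_group_add" and g :: 'a
  assumes "\<forall>j. f j \<noteq> 0" "(\<Sum>j<p2. f j) = 0" "is_square g"
  shows "vertex_magic TYPE('a) (M2_verts 0 p2 0) M2_adj"
proof -
  obtain h where g: "g \<noteq> 0" "g = h + h" using assms(3) by (auto simp: is_square_def)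
  then have "h \<noteq> 0" by auto
  define l where "l v = (case v of
      Core i \<Rightarrow> (if i = 2 then g else if i = 4 then - h else h)
    | Pend i j \<Rightarrow> f j)" for v
  have "vertex_magic_labeling (M2_verts 0 p2 0) M2_adj l"
    unfolding vertex_magic_labeling_def
  proof (intro conjI exI[of _ g])
    show "\<forall>v\<in>M2_verts 0 p2 0. l v \<noteq> 0"
    proof
      fix v assume "v \<in> M2_verts 0 p2 0"
      then show "l v \<noteq> 0"
        using assms(1) g \<open>h \<noteq> 0\<close> by (cases v) (simp_all add: l_def)
    qed
    show "\<forall>v\<in>M2_verts 0 p2 0. (\<Sum>u\<in>nbhd (M2_verts 0 p2 0) M2_adj v. l u) = g"
      unfolding M2_neighbour_sums_eq_iff using assms(2) g by (simp add: l_def pcount_def)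
  qed
  then show ?thesis by (auto simp: vertex_magic_def)
qed

theorem proposition4p2:
  fixes p1 p2 p3 :: nat
  assumes "card (UNIV :: ('a::{ab_group_add, finite}) set) \<ge> 3"
    and "has_diameter (M2_verts p1 p2 p3) M2_adj 3"
  shows "vertex_magic TYPE('a) (M2_verts p1 p2 p3) M2_adj \<longleftrightarrow>
         (p1 = 0 \<and> p3 = 0 \<and> p2 \<ge> 2 \<and> (\<exists>g::'a. is_square g))"
proof
  assume "vertex_magic TYPE('a) (M2_verts p1 p2 p3) M2_adj"
  then obtain l :: "m2vert \<Rightarrow> 'a" where "vertex_magic_labeling (M2_verts p1 p2 p3) M2_adj l"
    by (auto simp: vertex_magic_def)
  from M2_vertex_magic_labelingD[OF this M2_pendants_if_diameter_3[OF assms(2)]]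
  show "p1 = 0 \<and> p3 = 0 \<and> p2 \<ge> 2 \<and> (\<exists>g::'a. is_square g)" by blast
next
  assume "p1 = 0 \<and> p3 = 0 \<and> p2 \<ge> 2 \<and> (\<exists>g::'a. is_square g)"
  then obtain g :: 'a where "p1 = 0" "p3 = 0" "p2 \<ge> 2" "is_square g" by blast
  moreover obtain f :: "nat \<Rightarrow> 'a" where "\<forall>j. f j \<noteq> 0" "(\<Sum>j<p2. f j) = 0"
    using exists_nonzero_zero_sum[OF assms(1) \<open>p2 \<ge> 2\<close>] by blast
  ultimately show "vertex_magic TYPE('a) (M2_verts p1 p2 p3) M2_adj"
    using M2_vertex_magic_if_zero_sum_pendants by blast
qed

end
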